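(* For all integers $n\geq 0$, $$p_o(n)+\sum_{j\geq1}(-1)^j\left(p_o(n-j(3j-2))+p_o(n-j(3j+2))\right)=\begin{cases}1,&\text{if $n=3t$ for some triangular number $t$},\\0,&\text{otherwise,}\end{cases}$$ i.e. $p_o(n)-p_o(n-1)-p_o(n-5)+p_o(n-8)+p_o(n-16)-\cdots$ equals $1$ if $n$ is three times a triangular number and $0$ otherwise.
   Context: $p_o(n)$ is the number of partitions of $n$ into odd parts, with $p_o(0)=1$ and $p_o(m)=0$ for $m<0$. A triangular number is an integer of the form $k(k+1)/2$ with $k\ge 0$. *)

theory Defs
  imports Main "HOL-Library.Multiset"
begin

text \<open>Number of partitions of m into odd parts (a partition is a multiset of
  positive integers; odd naturals are automatically positive). Zero for m < 0.\<close>
definition p_o :: "int \<Rightarrow> nat" where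
  "p_o m = (if m < 0 then 0 else
     card {P :: nat multiset. (\<forall>x\<in>#P. odd x) \<and> sum_mset P = nat m})"

definition triangular :: "nat \<Rightarrow> bool" where
  "triangular t \<longleftrightarrow> (\<exists>k::nat. t = k * (k + 1) div 2)"

end

theory Submission
  imports Defs "HOL-Computational_Algebra.Formal_Power_Series"
begin

(*
  With P(q) = sum_n p_o(n) q^n = 1 / prod_{k odd} (1 - q^k), the identity says that
  (sum_{j in Z} (-1)^j q^(3j^2+2j)) P(q) = sum_{j in Z} q^(6j^2+3j) = sum_{k >= 0} q^(3 k(k+1)/2).
  By the Jacobi triple product the two theta series are
    prod_{k >= 1} (1 - q^(6k)) (1 - q^(6k-1)) (1 - q^(6k-5))  and
    prod_{k >= 1} (1 - q^(12k)) (1 + q^(12k-3)) (1 + q^(12k-9)).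
  Sorting the factors by residue classes, and using (1 + q^k)(1 - q^k) = 1 - q^(2k) for
  k = 3 (mod 6), the first product is the second one times prod_{k odd} (1 - q^k).

  Everything is proved with finite products: the triple product is derived in finite form from
  the q-binomial theorem, and with 2N+1 factors it agrees with the theta series up to degree N.
*)

section \<open>Partitions with parts in a given set\<close>

definition parts_count :: "nat set \<Rightarrow> nat \<Rightarrow> nat" where
  "parts_count S m = card {P. set_mset P \<subseteq> S \<and> sum_mset P = m}"

definition parts_gf :: "nat set \<Rightarrow> 'a::comm_ring_1 fps" where
  "parts_gf S = Abs_fps (\<lambda>m. of_nat (parts_count S m))"

lemma size_le_sum_mset: "0 \<notin># P \<Longrightarrow> size P \<le> sum_mset (P :: nat multiset)"
  by (induction P) auto

lemma finite_partitions:
  assumes "finite S" "0 \<notin> S"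
  shows "finite {P. set_mset P \<subseteq> S \<and> sum_mset P = (m::nat)}"
proof (rule finite_subset)
  have "size P \<le> m" if "set_mset P \<subseteq> S" "sum_mset P = m" for P
    using that assms(2) size_le_sum_mset by auto
  thus "{P. set_mset P \<subseteq> S \<and> sum_mset P = m} \<subseteq> (\<Union>k\<le>m. multisets_of_size S k)"
    by (auto simp: multisets_of_size_def)
  show "finite (\<Union>k\<le>m. multisets_of_size S k)"
    using assms(1) by auto
qed

lemma parts_count_empty: "parts_count {} m = (if m = 0 then 1 else 0)"
proof -
  have "{P :: nat multiset. set_mset P \<subseteq> {} \<and> sum_mset P = m} = (if m = 0 then {{#}} else {})"
    by auto
  thus ?thesis by (simp add: parts_count_def)
qed

lemma parts_count_insert:
  assumes "finite S" "0 \<notin> S" "a \<notin> S" "a > 0"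
  shows "parts_count (insert a S) m =
           parts_count S m + (if a \<le> m then parts_count (insert a S) (m - a) else 0)"
proof -
  let ?A = "{P. set_mset P \<subseteq> insert a S \<and> sum_mset P = m}"
  let ?B = "{P. set_mset P \<subseteq> S \<and> sum_mset P = m}"
  let ?C = "{P. set_mset P \<subseteq> insert a S \<and> sum_mset P = m \<and> a \<in># P}"
  have "finite ?A" using assms by (intro finite_partitions) auto
  moreover have "?A = ?B \<union> ?C" by auto
  moreover have "?B \<inter> ?C = {}" using assms(3) by auto
  ultimately have card_A: "card ?A = card ?B + card ?C"
    by (metis (no_types, lifting) card_Un_disjoint finite_Un)
  have "card ?C = (if a \<le> m then parts_count (insert a S) (m - a) else 0)"
  proof (cases "a \<le> m")
    case True
    let ?D = "{P. set_mset P \<subseteq> insert a S \<and> sum_mset P = m - a}"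
    have "?C = add_mset a ` ?D"
    proof
      show "?C \<subseteq> add_mset a ` ?D"
      proof
        fix P assume P: "P \<in> ?C"
        have "sum_mset (P - {#a#}) + a = sum_mset P" using P
          by (metis (no_types, lifting) mem_Collect_eq sum_mset.remove add.commute)
        hence "P - {#a#} \<in> ?D" using P by (auto dest: in_diffD)
        moreover have "P = add_mset a (P - {#a#})" using P by auto
        ultimately show "P \<in> add_mset a ` ?D" by blast
      qed
      show "add_mset a ` ?D \<subseteq> ?C" using True by auto
    qed
    thus ?thesis using True by (simp add: card_image inj_on_def parts_count_def)
  next
    case False
    have "a \<le> sum_mset P" if "a \<in># P" for P
      using that by (metis le_add1 sum_mset.remove)
    hence "?C = {}" using False by auto
    hence "card ?C = 0" by (simp only: card.empty)
    thus ?thesis using False by simp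
  qed
  with card_A show ?thesis by (simp add: parts_count_def)
qed

lemma parts_gf_empty: "parts_gf {} = 1"
  by (auto simp: parts_gf_def parts_count_empty fps_eq_iff)

lemma parts_gf_insert:
  assumes "finite S" "0 \<notin> S" "a \<notin> S" "a > 0"
  shows "parts_gf (insert a S) * (1 - fps_X ^ a) = (parts_gf S :: 'a::comm_ring_1 fps)"
proof -
  have "fps_nth (parts_gf (insert a S) * (1 - fps_X ^ a)) m = fps_nth (parts_gf S :: 'a fps) m" for m
    using parts_count_insert[OF assms, of m]
    by (simp add: algebra_simps fps_X_power_mult_nth parts_gf_def)
  thus ?thesis by (simp add: fps_eq_iff)
qed

lemma parts_gf_mult_prod:
  assumes "finite S" "0 \<notin> S"
  shows "parts_gf S * (\<Prod>k\<in>S. 1 - fps_X ^ k) = (1 :: 'a::comm_ring_1 fps)"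
  using assms
proof (induction S rule: finite_induct)
  case empty
  show ?case by (simp add: parts_gf_empty)
next
  case (insert a S)
  hence "parts_gf (insert a S) * (\<Prod>k\<in>insert a S. 1 - fps_X ^ k)
      = (parts_gf (insert a S) * (1 - fps_X ^ a)) * (\<Prod>k\<in>S. 1 - fps_X ^ k :: 'a fps)"
    by (simp add: mult.assoc)
  also have "\<dots> = 1" using insert by (simp add: parts_gf_insert)
  finally show ?case .
qed

lemma p_o_eq_parts_count:
  assumes "m \<le> M"
  shows "p_o (int m) = parts_count {k. odd k \<and> k \<le> M} m"
proof -
  have "x \<le> sum_mset P" if "x \<in># P" for x and P :: "nat multiset"
    using that by (metis le_add1 sum_mset.remove)
  hence "{P :: nat multiset. (\<forall>x\<in>#P. odd x) \<and> sum_mset P = m}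
       = {P. set_mset P \<subseteq> {k. odd k \<and> k \<le> M} \<and> sum_mset P = m}"
    using assms by fastforce
  thus ?thesis by (simp add: p_o_def parts_count_def)
qed

section \<open>The q-binomial theorem and the finite Jacobi triple product\<close>

fun qbinomial :: "'a::comm_ring_1 \<Rightarrow> nat \<Rightarrow> nat \<Rightarrow> 'a" where
  "qbinomial Q 0 k = (if k = 0 then 1 else 0)"
| "qbinomial Q (Suc n) 0 = 1"
| "qbinomial Q (Suc n) (Suc k) = qbinomial Q n (Suc k) + Q ^ (n - k) * qbinomial Q n k"

lemma qbinomial_eq_0: "n < k \<Longrightarrow> qbinomial Q n k = 0"
proof (induction n arbitrary: k)
  case (Suc n)
  then obtain k' where "k = Suc k'" by (cases k) auto
  with Suc show ?case by simp
qed simp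

lemma qbinomial_0_right [simp]: "qbinomial Q n 0 = 1"
  by (cases n) auto

lemma choose_two_Suc: "Suc m choose 2 = (m choose 2) + m"
  by (simp add: numeral_2_eq_2)

theorem qbinomial_theorem:
  fixes x y Q :: "'a::comm_ring_1"
  shows "(\<Prod>k<n. x + y * Q ^ k) = (\<Sum>m\<le>n. qbinomial Q n m * Q ^ (m choose 2) * y ^ m * x ^ (n - m))"
proof (induction n)
  case 0
  show ?case by (simp add: numeral_2_eq_2)
next
  case (Suc n)
  define R where "R = (\<Sum>m\<le>n. qbinomial Q n m * Q ^ (m choose 2) * y ^ m * x ^ (n - m))"
  have xR: "x * R = x ^ Suc n +
      (\<Sum>m\<le>n. qbinomial Q n (Suc m) * Q ^ (Suc m choose 2) * y ^ Suc m * x ^ (n - m))"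
  proof -
    have "x * R = (\<Sum>m\<le>Suc n. qbinomial Q n m * Q ^ (m choose 2) * y ^ m * x ^ (Suc n - m))"
      by (simp add: R_def sum_distrib_left qbinomial_eq_0 Suc_diff_le algebra_simps)
    thus ?thesis unfolding sum.atMost_Suc_shift by (simp add: numeral_2_eq_2)
  qed
  have yR: "y * Q ^ n * R =
      (\<Sum>m\<le>n. Q ^ (n - m) * qbinomial Q n m * Q ^ (Suc m choose 2) * y ^ Suc m * x ^ (n - m))"
    unfolding R_def sum_distrib_left
  proof (intro sum.cong refl)
    fix m assume "m \<in> {..n}"
    hence exp: "Q ^ n * Q ^ (m choose 2) = Q ^ (n - m) * Q ^ (Suc m choose 2)"
      by (simp add: choose_two_Suc flip: power_add)
    have "y * Q ^ n * (qbinomial Q n m * Q ^ (m choose 2) * y ^ m * x ^ (n - m))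
        = qbinomial Q n m * (Q ^ n * Q ^ (m choose 2)) * y ^ Suc m * x ^ (n - m)"
      by (simp add: ac_simps)
    also have "\<dots> = Q ^ (n - m) * qbinomial Q n m * Q ^ (Suc m choose 2) * y ^ Suc m * x ^ (n - m)"
      by (simp only: exp ac_simps)
    finally show "y * Q ^ n * (qbinomial Q n m * Q ^ (m choose 2) * y ^ m * x ^ (n - m)) =
        Q ^ (n - m) * qbinomial Q n m * Q ^ (Suc m choose 2) * y ^ Suc m * x ^ (n - m)" .
  qed
  have "(\<Prod>k<Suc n. x + y * Q ^ k) = x * R + y * Q ^ n * R"
    using Suc by (simp add: R_def algebra_simps)
  also have "\<dots> = x ^ Suc n +
      (\<Sum>m\<le>n. qbinomial Q (Suc n) (Suc m) * Q ^ (Suc m choose 2) * y ^ Suc m * x ^ (n - m))"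
    unfolding xR yR by (simp add: sum.distrib algebra_simps)
  also have "\<dots> = (\<Sum>m\<le>Suc n. qbinomial Q (Suc n) m * Q ^ (m choose 2) * y ^ m * x ^ (Suc n - m))"
    unfolding sum.atMost_Suc_shift by (simp add: numeral_2_eq_2)
  finally show ?case .
qed

definition qpochhammer :: "'a::comm_ring_1 \<Rightarrow> nat \<Rightarrow> 'a" where
  "qpochhammer Q n = (\<Prod>i\<in>{1..n}. 1 - Q ^ i)"

lemma qpochhammer_0 [simp]: "qpochhammer Q 0 = 1"
  by (simp add: qpochhammer_def)

lemma qpochhammer_Suc: "qpochhammer Q (Suc n) = qpochhammer Q n * (1 - Q ^ Suc n)"
  by (simp add: qpochhammer_def)

lemma qpochhammer_diff_Suc:
  "j < n \<Longrightarrow> qpochhammer Q (n - j) = qpochhammer Q (n - Suc j) * (1 - Q ^ (n - j))"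
  by (metis Suc_diff_Suc qpochhammer_Suc)

lemma qbinomial_mult_qpochhammer:
  "k \<le> n \<Longrightarrow> qbinomial Q n k * qpochhammer Q k * qpochhammer Q (n - k) = qpochhammer Q n"
proof (induction n arbitrary: k)
  case (Suc n)
  show ?case
  proof (cases k)
    case (Suc j)
    hence "j \<le> n" using Suc.prems by simp
    have left: "qbinomial Q n (Suc j) * qpochhammer Q (Suc j) * qpochhammer Q (n - j)
        = qpochhammer Q n * (1 - Q ^ (n - j))"
    proof (cases "j = n")
      case False
      with \<open>j \<le> n\<close> have "j < n" by simp
      hence "qbinomial Q n (Suc j) * qpochhammer Q (Suc j) * qpochhammer Q (n - j)
          = (qbinomial Q n (Suc j) * qpochhammer Q (Suc j) * qpochhammer Q (n - Suc j))
            * (1 - Q ^ (n - j))"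
        by (simp only: qpochhammer_diff_Suc ac_simps)
      thus ?thesis using Suc.IH[of "Suc j"] \<open>j < n\<close> by simp
    qed (simp add: qbinomial_eq_0)
    have "Q ^ (n - j) * qbinomial Q n j * qpochhammer Q (Suc j) * qpochhammer Q (n - j)
        = Q ^ (n - j) * (qbinomial Q n j * qpochhammer Q j * qpochhammer Q (n - j)) * (1 - Q ^ Suc j)"
      by (simp only: qpochhammer_Suc ac_simps)
    hence right: "Q ^ (n - j) * qbinomial Q n j * qpochhammer Q (Suc j) * qpochhammer Q (n - j)
        = Q ^ (n - j) * qpochhammer Q n * (1 - Q ^ Suc j)"
      using Suc.IH[OF \<open>j \<le> n\<close>] by simp
    have "qbinomial Q (Suc n) k * qpochhammer Q k * qpochhammer Q (Suc n - k)
        = qbinomial Q n (Suc j) * qpochhammer Q (Suc j) * qpochhammer Q (n - j)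
          + Q ^ (n - j) * qbinomial Q n j * qpochhammer Q (Suc j) * qpochhammer Q (n - j)"
      using Suc by (simp add: algebra_simps)
    also have "\<dots> = qpochhammer Q n * (1 - Q ^ (n - j) * Q ^ Suc j)"
      unfolding left right by (simp add: algebra_simps)
    also have "(n - j) + Suc j = Suc n" using \<open>j \<le> n\<close> by simp
    hence "Q ^ (n - j) * Q ^ Suc j = Q ^ Suc n" by (metis power_add)
    finally show ?thesis by (simp add: qpochhammer_Suc)
  qed simp
qed simp

definition absdiff :: "nat \<Rightarrow> nat \<Rightarrow> nat" where
  "absdiff m n = (if n \<le> m then m - n else n - m)"

lemma int_absdiff_squared: "int ((absdiff m n)^2) = (int m - int n)^2"
  by (auto simp: absdiff_def power2_eq_square of_nat_diff algebra_simps)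

lemma prod_power_square_powers: "(\<Prod>k<n. ((p::'a::comm_monoid_mult)^2) ^ k) = p ^ (n * (n - 1))"
proof (induction n)
  case (Suc n)
  have exp: "n * (n - 1) + 2 * n = Suc n * (Suc n - 1)" by (cases n) (simp_all add: algebra_simps)
  have "(\<Prod>k<Suc n. (p^2)^k) = p ^ (n * (n - 1) + 2 * n)"
    using Suc by (simp add: power_add power_mult)
  also have "\<dots> = p ^ (Suc n * (Suc n - 1))" by (simp only: exp)
  finally show ?case .
qed simp

lemma jacobi_exponent_identity:
  assumes "m \<le> 2 * n"
  shows "m * (m - 1) + (2 * n - 1) * (2 * n - m) = n * (n - 1) + n * (2 * n - 1) + (absdiff m n)^2"
proof (cases n)
  case 0
  thus ?thesis using assms by (simp add: absdiff_def)
next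
  case (Suc k)
  have "int (m * (m - 1)) = int m * (int m - 1)" by (cases m) (simp_all add: algebra_simps)
  moreover have "int (n * (n - 1)) = int n * (int n - 1)" using Suc by (simp add: algebra_simps)
  moreover have "int (2 * n - 1) = 2 * int n - 1" "int (2 * n - m) = 2 * int n - int m"
    using Suc assms by (simp_all add: of_nat_diff)
  ultimately have "int (m * (m - 1) + (2 * n - 1) * (2 * n - m))
      = int (n * (n - 1) + n * (2 * n - 1) + (absdiff m n)^2)"
    unfolding of_nat_add of_nat_mult[of "2 * n - 1"] of_nat_mult[of n] int_absdiff_squared
    by (simp add: algebra_simps power2_eq_square)
  thus ?thesis by (simp only: of_nat_eq_iff)
qed

lemma prod_lessThan_add: "(\<Prod>k<a + (b::nat). f k) = (\<Prod>k<a. f k) * (\<Prod>i<b. f (a + i))"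
  by (induction b) (simp_all add: mult.assoc)

lemma prod_qbinomial_factors_eq_jacobi:
  fixes p z :: "'a::comm_ring_1"
  assumes "n > 0"
  shows "(\<Prod>k<2*n. p ^ (2 * n - 1) + z * (p^2) ^ k)
       = p ^ (n * (n - 1) + n * (2 * n - 1)) * (\<Prod>k<n. (1 + z * p * (p^2)^k) * (z + p * (p^2)^k))"
proof -
  define Q where "Q = p^2"
  define x where "x = p ^ (2 * n - 1)"
  from assms obtain n' where n: "n = Suc n'" by (cases n) auto
  have x_eq: "x = p * Q ^ (n - 1)" and xp_eq: "x * p = Q ^ n"
    by (simp_all add: x_def Q_def n power_mult power2_eq_square)
  have "(\<Prod>k<n. x + z * Q ^ k) = (\<Prod>k<n. Q ^ k * (z + p * Q ^ (n - 1 - k)))"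
  proof (intro prod.cong refl)
    fix k assume "k \<in> {..<n}"
    hence "Q ^ (n - 1) = Q ^ k * Q ^ (n - 1 - k)" by (simp flip: power_add)
    thus "x + z * Q ^ k = Q ^ k * (z + p * Q ^ (n - 1 - k))" by (simp add: x_eq algebra_simps)
  qed
  also have "\<dots> = (\<Prod>k<n. Q ^ k) * (\<Prod>k<n. z + p * Q ^ k)"
    using prod.nat_diff_reindex[of "\<lambda>k. z + p * Q ^ k" n] by (simp add: prod.distrib)
  finally have lower: "(\<Prod>k<n. x + z * Q ^ k) = p ^ (n * (n - 1)) * (\<Prod>k<n. z + p * Q ^ k)"
    by (simp add: Q_def prod_power_square_powers)
  have "(\<Prod>i<n. x + z * Q ^ (n + i)) = (\<Prod>i<n. x * (1 + z * p * Q ^ i))"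
    by (intro prod.cong refl) (simp add: power_add algebra_simps flip: xp_eq)
  hence upper: "(\<Prod>i<n. x + z * Q ^ (n + i)) = x ^ n * (\<Prod>i<n. 1 + z * p * Q ^ i)"
    by (simp add: prod.distrib)
  have "(\<Prod>k<2*n. x + z * Q ^ k) = (\<Prod>k<n. x + z * Q ^ k) * (\<Prod>i<n. x + z * Q ^ (n + i))"
    using prod_lessThan_add[of "\<lambda>k. x + z * Q ^ k" n n] by (simp add: mult_2)
  also have "\<dots> = (p ^ (n * (n - 1)) * x ^ n)
      * ((\<Prod>k<n. 1 + z * p * Q^k) * (\<Prod>k<n. z + p * Q^k))"
    unfolding lower upper by (simp add: ac_simps)
  also have "p ^ (n * (n - 1)) * x ^ n = p ^ (n * (n - 1) + n * (2 * n - 1))"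
    by (simp add: x_def power_add mult.commute flip: power_mult)
  finally show ?thesis
    by (simp add: x_def Q_def prod.distrib)
qed

lemma jacobi_power_identity:
  fixes p :: "'a::comm_monoid_mult"
  assumes "m \<le> 2 * n"
  shows "(p^2) ^ (m choose 2) * (p ^ (2 * n - 1)) ^ (2 * n - m)
       = p ^ (n * (n - 1) + n * (2 * n - 1)) * p ^ (absdiff m n)^2"
proof -
  have "2 * (m choose 2) = m * (m - 1)"
    by (cases m) (simp_all add: choose_two)
  hence "(p^2) ^ (m choose 2) * (p ^ (2 * n - 1)) ^ (2 * n - m)
      = p ^ (m * (m - 1) + (2 * n - 1) * (2 * n - m))"
    by (simp add: power_add flip: power_mult)
  also have "\<dots> = p ^ (n * (n - 1) + n * (2 * n - 1) + (absdiff m n)^2)"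
    using assms jacobi_exponent_identity[of m n] by simp
  finally show ?thesis
    by (simp add: power_add)
qed

theorem jacobi_triple_product_finite:
  fixes p z :: "'a::idom"
  assumes "p \<noteq> 0"
  shows "(\<Prod>k<n. (1 + z * p * (p^2)^k) * (z + p * (p^2)^k))
       = (\<Sum>m\<le>2*n. qbinomial (p^2) (2*n) m * p ^ (absdiff m n)^2 * z ^ m)"
proof (cases "n = 0")
  case True
  thus ?thesis by (simp add: absdiff_def)
next
  case False
  define C where "C = p ^ (n * (n - 1) + n * (2 * n - 1))"
  have "C * (\<Prod>k<n. (1 + z * p * (p^2)^k) * (z + p * (p^2)^k))
      = (\<Prod>k<2*n. p ^ (2 * n - 1) + z * (p^2) ^ k)"
    unfolding C_def using False by (intro prod_qbinomial_factors_eq_jacobi [symmetric]) simp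
  also have "\<dots> = (\<Sum>m\<le>2*n. qbinomial (p^2) (2*n) m * (p^2) ^ (m choose 2) * z ^ m
                                * (p ^ (2 * n - 1)) ^ (2*n - m))"
    by (rule qbinomial_theorem)
  also have "\<dots> = C * (\<Sum>m\<le>2*n. qbinomial (p^2) (2*n) m * p ^ (absdiff m n)^2 * z ^ m)"
    unfolding sum_distrib_left
  proof (intro sum.cong refl)
    fix m assume "m \<in> {..2*n}"
    hence "(p^2) ^ (m choose 2) * (p ^ (2 * n - 1)) ^ (2 * n - m) = C * p ^ (absdiff m n)^2"
      unfolding C_def by (intro jacobi_power_identity) simp
    thus "qbinomial (p^2) (2*n) m * (p^2) ^ (m choose 2) * z ^ m * (p ^ (2 * n - 1)) ^ (2*n - m)
        = C * (qbinomial (p^2) (2*n) m * p ^ (absdiff m n)^2 * z ^ m)"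
      by (simp add: ac_simps)
  qed
  finally show ?thesis
    using assms by (simp add: C_def)
qed

section \<open>Agreement of power series up to a given degree\<close>

definition eq_upto :: "nat \<Rightarrow> 'a::comm_ring_1 fps \<Rightarrow> 'a fps \<Rightarrow> bool" where
  "eq_upto N f g \<longleftrightarrow> (\<forall>i\<le>N. fps_nth f i = fps_nth g i)"

lemma eq_upto_refl [simp]: "eq_upto N f f"
  by (simp add: eq_upto_def)

lemma eq_upto_sym: "eq_upto N f g \<Longrightarrow> eq_upto N g f"
  by (simp add: eq_upto_def)

lemma eq_upto_trans [trans]: "eq_upto N f g \<Longrightarrow> eq_upto N g h \<Longrightarrow> eq_upto N f h"
  by (simp add: eq_upto_def)

lemma eq_upto_eq_trans [trans]: "f = g \<Longrightarrow> eq_upto N g h \<Longrightarrow> eq_upto N f h"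
  and eq_upto_trans_eq [trans]: "eq_upto N f g \<Longrightarrow> g = h \<Longrightarrow> eq_upto N f h"
  by simp_all

lemma eq_upto_mult: "eq_upto N f g \<Longrightarrow> eq_upto N f' g' \<Longrightarrow> eq_upto N (f * f') (g * g')"
  by (simp add: eq_upto_def fps_mult_nth)

lemma eq_upto_sum: "(\<And>k. k \<in> S \<Longrightarrow> eq_upto N (f k) (g k)) \<Longrightarrow> eq_upto N (sum f S) (sum g S)"
  by (simp add: eq_upto_def fps_sum_nth)

lemma eq_upto_prod: "(\<And>k. k \<in> S \<Longrightarrow> eq_upto N (f k) (g k)) \<Longrightarrow> eq_upto N (prod f S) (prod g S)"
  by (induction S rule: infinite_finite_induct) (simp_all add: eq_upto_mult)

lemma eq_upto_one_plus_X_power: "N < k \<Longrightarrow> eq_upto N (1 + c * fps_X ^ k) 1"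
  by (simp add: eq_upto_def fps_X_power_mult_right_nth)

lemma eq_upto_X_power_mult_0: "N < k \<Longrightarrow> eq_upto N (fps_X ^ k * f) 0"
  by (simp add: eq_upto_def fps_X_power_mult_nth)

lemma eq_upto_prod_subset:
  assumes "finite S" "T \<subseteq> S" "\<And>k. k \<in> S - T \<Longrightarrow> eq_upto N (f k) 1"
  shows "eq_upto N (prod f S) (prod f T)"
proof -
  have "prod f S = prod f T * prod f (S - T)"
    using assms(1,2) by (metis mult.commute prod.subset_diff)
  also have "eq_upto N \<dots> (prod f T * prod (\<lambda>_. 1) (S - T))"
    by (intro eq_upto_mult eq_upto_refl eq_upto_prod assms(3))
  finally show ?thesis by simp
qed

lemma eq_upto_X_power_mult_iff:
  "eq_upto (N + c) (fps_X ^ c * f) (fps_X ^ c * g) \<longleftrightarrow> eq_upto N f g"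
proof -
  have "(\<forall>i\<le>N + c. fps_nth (fps_X ^ c * f) i = fps_nth (fps_X ^ c * g) i)
      \<longleftrightarrow> (\<forall>i\<le>N. fps_nth f i = fps_nth g i)"
    by (auto simp: fps_X_power_mult_nth)
  thus ?thesis by (simp add: eq_upto_def)
qed

lemma eq_upto_X_power_mult:
  "eq_upto N f g \<Longrightarrow> c \<le> e \<Longrightarrow> eq_upto (N + c) (fps_X ^ e * f) (fps_X ^ e * g)"
  by (auto simp: eq_upto_def fps_X_power_mult_nth)

lemma eq_upto_mult_cancel_right:
  assumes "eq_upto N (f * h) (g * h)" "fps_nth h 0 = 1"
  shows "eq_upto N f g"
  unfolding eq_upto_def
proof (intro allI impI)
  fix i show "i \<le> N \<Longrightarrow> fps_nth f i = fps_nth g i"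
  proof (induction i rule: less_induct)
    case (less i)
    have "fps_nth ((f - g) * h) i = 0"
      using assms(1) less.prems by (simp add: eq_upto_def algebra_simps)
    moreover have "fps_nth ((f - g) * h) i = (\<Sum>j=0..i. fps_nth (f - g) j * fps_nth h (i - j))"
      by (rule fps_mult_nth)
    also have "\<dots> = (\<Sum>j\<in>{i}. fps_nth (f - g) j * fps_nth h (i - j))"
      by (rule sum.mono_neutral_right) (use less in auto)
    also have "\<dots> = fps_nth (f - g) i"
      using assms(2) by simp
    ultimately show ?case by simp
  qed
qed

section \<open>The Jacobi triple product up to a given degree\<close>

lemma qpochhammer_X_power_upto:
  assumes "c \<ge> 1" "N \<le> k"
  shows "eq_upto N (qpochhammer (fps_X ^ c) k) (qpochhammer (fps_X ^ c :: 'a::comm_ring_1 fps) N)"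
  unfolding qpochhammer_def
proof (rule eq_upto_prod_subset)
  fix i assume "i \<in> {1..k} - {1..N}"
  hence "N < i" by auto
  also have "i \<le> c * i" using assms(1) by simp
  finally have "N < c * i" .
  thus "eq_upto N (1 - (fps_X ^ c) ^ i) (1 :: 'a fps)"
    by (simp add: eq_upto_def flip: power_mult)
qed (use assms in auto)

lemma qbinomial_qpochhammer_upto:
  fixes c :: nat
  defines "Q \<equiv> fps_X ^ c :: 'a::comm_ring_1 fps"
  assumes "c \<ge> 1" "N \<le> m" "m + N \<le> 2 * n"
  shows "eq_upto N (qbinomial Q (2 * n) m * qpochhammer Q n) 1"
proof -
  define E where "E = qpochhammer Q n"
  have stable: "eq_upto N (qpochhammer Q k) E" if "N \<le> k" for k
  proof -
    have "eq_upto N (qpochhammer Q k) (qpochhammer Q N)"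
      unfolding Q_def using assms(2) that by (rule qpochhammer_X_power_upto)
    moreover have "eq_upto N (qpochhammer Q n) (qpochhammer Q N)"
      unfolding Q_def using assms by (intro qpochhammer_X_power_upto) auto
    ultimately show ?thesis unfolding E_def by (meson eq_upto_sym eq_upto_trans)
  qed
  have "eq_upto N (qbinomial Q (2 * n) m * E * E)
          (qbinomial Q (2 * n) m * qpochhammer Q m * qpochhammer Q (2 * n - m))"
    using assms by (intro eq_upto_mult eq_upto_refl eq_upto_sym[OF stable]) auto
  also have "\<dots> = qpochhammer Q (2 * n)"
    using assms by (intro qbinomial_mult_qpochhammer) auto
  also have "eq_upto N \<dots> (1 * E)"
    using assms(3,4) by (simp add: stable)
  finally have "eq_upto N (qbinomial Q (2 * n) m * E * E) (1 * E)" .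
  moreover have "eq_upto 0 E (qpochhammer Q 0)"
    unfolding E_def Q_def using assms(2) by (rule qpochhammer_X_power_upto) simp
  hence "fps_nth E 0 = 1" by (simp add: eq_upto_def)
  ultimately show ?thesis unfolding E_def by (rule eq_upto_mult_cancel_right)
qed

(* The partial theta series sum_{|j| <= K} s^j q^(a j^2 + b j), the terms for j and -j grouped;
   for b <= a the exponent a j^2 - b j does not truncate. *)
definition theta_partial :: "nat \<Rightarrow> nat \<Rightarrow> 'a \<Rightarrow> nat \<Rightarrow> 'a::comm_ring_1 fps" where
  "theta_partial a b s K =
     1 + (\<Sum>j\<in>{1..K}. fps_const (s ^ j) * (fps_X ^ (a * j^2 + b * j) + fps_X ^ (a * j^2 - b * j)))"

definition jacobi_product :: "nat \<Rightarrow> nat \<Rightarrow> 'a \<Rightarrow> nat \<Rightarrow> 'a::comm_ring_1 fps" where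
  "jacobi_product a b s K = qpochhammer (fps_X ^ (2 * a)) K *
     (\<Prod>k<K. (1 + fps_const s * fps_X ^ (a * (2 * k + 1) + b))
             * (1 + fps_const s * fps_X ^ (a * (2 * k + 1) - b)))"

lemma power_square_eq_1: "s * s = 1 \<Longrightarrow> s ^ k * s ^ k = (1 :: 'a::comm_monoid_mult)"
  by (metis power_mult_distrib power_one)

lemma power_reflect:
  fixes s :: "'a::comm_monoid_mult"
  assumes "s * s = 1" "j \<le> n"
  shows "s ^ (n + (n + j)) = s ^ j" "s ^ (n + (n - j)) = s ^ j"
proof -
  show "s ^ (n + (n + j)) = s ^ j"
    using power_square_eq_1[OF assms(1), of n] by (simp only: add.assoc[symmetric] power_add mult_1)
  have "n + (n - j) + j = n + n" using assms(2) by simp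
  hence "s ^ (n + (n - j)) * s ^ j = 1"
    using power_square_eq_1[OF assms(1), of n] by (metis power_add)
  thus "s ^ (n + (n - j)) = s ^ j"
    by (metis mult.assoc mult_1_left mult_1_right power_square_eq_1[OF assms(1)])
qed

lemma jacobi_factor_shift:
  fixes S X :: "'a::comm_ring_1"
  assumes "b \<le> a" "S * S = 1"
  shows "(1 + S * X ^ b * X ^ a * (X ^ (2 * a)) ^ k) * (S * X ^ b + X ^ a * (X ^ (2 * a)) ^ k)
       = S * X ^ b * ((1 + S * X ^ (a * (2 * k + 1) + b)) * (1 + S * X ^ (a * (2 * k + 1) - b)))"
proof -
  have "b \<le> a * (2 * k + 1)" using assms(1) by (simp add: algebra_simps)
  hence low: "X ^ a * (X ^ (2 * a)) ^ k = X ^ b * X ^ (a * (2 * k + 1) - b)"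
    by (simp add: algebra_simps flip: power_add power_mult)
  have high: "X ^ b * X ^ a * (X ^ (2 * a)) ^ k = X ^ (a * (2 * k + 1) + b)"
    by (simp add: algebra_simps flip: power_add power_mult)
  have "(1 + S * X ^ b * X ^ a * (X ^ (2 * a)) ^ k) * (S * X ^ b + X ^ a * (X ^ (2 * a)) ^ k)
      = (1 + S * (X ^ b * X ^ a * (X ^ (2 * a)) ^ k))
        * (S * X ^ b + (S * S) * (X ^ b * X ^ (a * (2 * k + 1) - b)))"
    using assms(2) unfolding low by (simp add: ac_simps)
  also have "\<dots> = S * X ^ b * ((1 + S * X ^ (a * (2 * k + 1) + b)) * (1 + S * X ^ (a * (2 * k + 1) - b)))"
    unfolding high by (simp add: algebra_simps)
  finally show ?thesis .
qed

lemma jacobi_product_expansion: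
  fixes s :: "'a::idom"
  assumes "b \<le> a" "s * s = 1"
  shows "fps_X ^ (b * n) * jacobi_product a b s n
       = (\<Sum>m\<le>2*n. fps_const (s ^ (n + m)) * fps_X ^ (a * (absdiff m n)^2 + b * m)
                  * (qbinomial (fps_X ^ (2 * a)) (2 * n) m * qpochhammer (fps_X ^ (2 * a)) n))"
proof -
  define X :: "'a fps" where "X = fps_X"
  define S where "S = fps_const s"
  define Q where "Q = X ^ (2 * a)"
  define z where "z = S * X ^ b"
  define P where "P = (\<Prod>k<n. (1 + S * X ^ (a * (2 * k + 1) + b)) * (1 + S * X ^ (a * (2 * k + 1) - b)))"
  have SS: "S ^ k * S ^ k = 1" for k
    using power_square_eq_1[OF assms(2), of k] by (simp add: S_def)
  have "z ^ n * P = (\<Prod>k<n. (1 + z * X ^ a * Q ^ k) * (z + X ^ a * Q ^ k))"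
    using jacobi_factor_shift[OF assms(1), of S X] SS[of 1]
    by (simp add: z_def Q_def P_def prod.distrib)
  also have "\<dots> = (\<Sum>m\<le>2*n. qbinomial Q (2*n) m * X ^ (a * (absdiff m n)^2) * z ^ m)"
    using jacobi_triple_product_finite[of "X ^ a" z n]
    by (simp add: Q_def X_def power_mult mult.commute[of a 2] flip: power_mult)
  finally have zP: "z ^ n * P = \<dots>" .
  have "X ^ (b * n) * (qpochhammer Q n * P) = S ^ n * qpochhammer Q n * (z ^ n * P)"
    by (simp add: z_def algebra_simps SS flip: power_mult)
  also have "\<dots> = (\<Sum>m\<le>2*n. S ^ (n + m) * X ^ (a * (absdiff m n)^2 + b * m)
                            * (qbinomial Q (2 * n) m * qpochhammer Q n))"
    unfolding zP sum_distrib_left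
    by (intro sum.cong refl) (simp add: z_def power_add algebra_simps flip: power_mult)
  finally show ?thesis
    by (simp add: jacobi_product_def X_def S_def Q_def P_def)
qed

lemma sum_atMost_double:
  fixes n :: nat
  shows "(\<Sum>m\<le>2*n. f m) = f n + (\<Sum>j\<in>{1..n}. f (n + j) + f (n - j))"
proof -
  have "(\<Sum>m\<le>2*n. f m) = sum f {0..n+n}" by (simp add: atLeast0AtMost mult_2)
  also have "\<dots> = sum f {0..n} + sum f {n+1..n+n}" by (rule sum.ub_add_nat) simp
  also have "sum f {n+1..n+n} = (\<Sum>j\<in>{1..n}. f (n + j))"
    using sum.shift_bounds_cl_nat_ivl[of f 1 n n] by (simp add: add.commute)
  also have "sum f {0..n} = sum f {..<n} + f n"
    by (simp add: atLeast0AtMost lessThan_Suc_atMost[symmetric])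
  also have "sum f {..<n} = (\<Sum>i<n. f (n - Suc i))" by (rule sum.nat_diff_reindex[symmetric])
  also have "\<dots> = (\<Sum>j\<in>{1..n}. f (n - j))"
    using sum.atLeast1_atMost_eq[of "\<lambda>j. f (n - j)" n] by simp
  finally show ?thesis by (simp add: sum.distrib ac_simps)
qed

lemma theta_partial_expansion:
  fixes s :: "'a::comm_ring_1"
  assumes "b \<le> a" "s * s = 1"
  shows "fps_X ^ (b * n) * theta_partial a b s n
       = (\<Sum>m\<le>2*n. fps_const (s ^ (n + m)) * fps_X ^ (a * (absdiff m n)^2 + b * m))"
proof -
  define F where "F m = fps_const (s ^ (n + m)) * fps_X ^ (a * (absdiff m n)^2 + b * m)" for m
  define T :: "nat \<Rightarrow> 'a fps" where
    "T j = fps_const (s ^ j) * (fps_X ^ (a * j^2 + b * j) + fps_X ^ (a * j^2 - b * j))" for j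
  have "F n = fps_X ^ (b * n)"
    using power_square_eq_1[OF assms(2), of n] by (simp add: F_def absdiff_def power_add)
  moreover have "F (n + j) + F (n - j) = fps_X ^ (b * n) * T j" if "j \<in> {1..n}" for j
  proof -
    have "b * j \<le> a * j^2"
      using assms(1) by (intro mult_le_mono) (simp_all add: power2_eq_square)
    moreover have "absdiff (n - j) n = j" "absdiff (n + j) n = j"
      using that by (auto simp: absdiff_def)
    moreover have "b * (n - j) + b * j = b * n"
      using that by (simp flip: add_mult_distrib2)
    ultimately have "a * (absdiff (n - j) n)^2 + b * (n - j) = b * n + (a * j^2 - b * j)"
      and "a * (absdiff (n + j) n)^2 + b * (n + j) = b * n + (a * j^2 + b * j)"
      by (simp_all add: algebra_simps)
    moreover note power_reflect[OF assms(2), of j n]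
    ultimately show ?thesis
      using that unfolding F_def T_def by (simp only: power_add) (simp add: algebra_simps)
  qed
  ultimately have "(\<Sum>m\<le>2*n. F m) = fps_X ^ (b * n) + (\<Sum>j\<in>{1..n}. fps_X ^ (b * n) * T j)"
    unfolding sum_atMost_double by simp
  thus ?thesis
    by (simp add: F_def T_def theta_partial_def distrib_left sum_distrib_left)
qed

lemma jacobi_exponent_bound:
  assumes "b < (a::nat)"
  shows "b * n + absdiff m n \<le> a * (absdiff m n)^2 + b * m"
proof -
  define d where "d = absdiff m n"
  have "(b + 1) * d \<le> a * d^2"
    using assms by (intro mult_le_mono) (simp_all add: power2_eq_square)
  moreover have "n \<le> m + d" unfolding d_def absdiff_def by arith
  hence "b * n \<le> b * m + b * d" by (metis add_mult_distrib2 mult_le_mono2)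
  ultimately show ?thesis by (simp add: d_def algebra_simps)
qed

(* For |m - n| <= N the Gaussian binomial is 1 / (Q;Q)_n up to degree N, and the remaining
   terms only start beyond degree N + b n. *)
lemma jacobi_term_upto:
  fixes c :: "'a::comm_ring_1" and a b m n N :: nat
  defines "Q \<equiv> fps_X ^ (2 * a) :: 'a fps"
      and "e \<equiv> a * (absdiff m n)^2 + b * m"
  assumes "b < a" "n = 2 * N + 1"
  shows "eq_upto (N + b * n) (fps_const c * fps_X ^ e * (qbinomial Q (2 * n) m * qpochhammer Q n))
                             (fps_const c * fps_X ^ e)"
proof (cases "absdiff m n \<le> N")
  case True
  hence "N \<le> m" "m + N \<le> 2 * n"
    using assms(4) by (auto simp: absdiff_def split: if_splits)
  hence "eq_upto N (qbinomial Q (2 * n) m * qpochhammer Q n) 1"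
    unfolding Q_def using assms(3) by (intro qbinomial_qpochhammer_upto) auto
  moreover have "b * n \<le> e"
    using jacobi_exponent_bound[OF assms(3), of n m] by (simp add: e_def)
  ultimately have "eq_upto (N + b * n) (fps_X ^ e * (qbinomial Q (2 * n) m * qpochhammer Q n))
                     (fps_X ^ e * 1)"
    by (rule eq_upto_X_power_mult)
  hence "eq_upto (N + b * n) (fps_const c * (fps_X ^ e * (qbinomial Q (2 * n) m * qpochhammer Q n)))
                             (fps_const c * (fps_X ^ e * 1))"
    by (rule eq_upto_mult[OF eq_upto_refl])
  thus ?thesis by (simp add: mult.assoc)
next
  case False
  hence "N + b * n < e"
    using jacobi_exponent_bound[OF assms(3), of n m] by (simp add: e_def)
  hence "eq_upto (N + b * n) (fps_X ^ e * (fps_const c * (qbinomial Q (2 * n) m * qpochhammer Q n))) 0"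
    and "eq_upto (N + b * n) (fps_X ^ e * fps_const c) 0"
    by (simp_all only: eq_upto_X_power_mult_0)
  hence "eq_upto (N + b * n) (fps_const c * fps_X ^ e * (qbinomial Q (2 * n) m * qpochhammer Q n)) 0"
    and "eq_upto (N + b * n) (fps_const c * fps_X ^ e) 0"
    by (simp_all only: ac_simps)
  thus ?thesis by (blast intro: eq_upto_sym eq_upto_trans)
qed

theorem jacobi_triple_product_upto:
  fixes s :: "'a::idom"
  assumes "b < a" "s * s = 1"
  shows "eq_upto N (jacobi_product a b s (2 * N + 1)) (theta_partial a b s (2 * N + 1))"
proof -
  define n where "n = 2 * N + 1"
  have "fps_X ^ (b * n) * jacobi_product a b s n
      = (\<Sum>m\<le>2*n. fps_const (s ^ (n + m)) * fps_X ^ (a * (absdiff m n)^2 + b * m)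
                  * (qbinomial (fps_X ^ (2 * a)) (2 * n) m * qpochhammer (fps_X ^ (2 * a)) n))"
    using assms by (intro jacobi_product_expansion) auto
  also have "eq_upto (N + b * n) \<dots>
      (\<Sum>m\<le>2*n. fps_const (s ^ (n + m)) * fps_X ^ (a * (absdiff m n)^2 + b * m))"
    using assms(1) n_def by (intro eq_upto_sum jacobi_term_upto)
  also have "\<dots> = fps_X ^ (b * n) * theta_partial a b s n"
    using assms by (intro theta_partial_expansion [symmetric]) auto
  finally show ?thesis
    unfolding eq_upto_X_power_mult_iff n_def .
qed

section \<open>The product identity\<close>

definition factor_prod :: "'a \<Rightarrow> nat set \<Rightarrow> 'a::comm_ring_1 fps" where
  "factor_prod c T = (\<Prod>k\<in>T. 1 + fps_const c * fps_X ^ k)"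

definition residues_upto :: "nat \<Rightarrow> nat \<Rightarrow> nat \<Rightarrow> nat set" where
  "residues_upto N d r = {k. 0 < k \<and> k \<le> N \<and> k mod d = r}"

lemma finite_residues_upto [simp]: "finite (residues_upto N d r)"
  by (simp add: residues_upto_def)

lemma factor_prod_upto:
  assumes "finite T" "T \<inter> {..N} = U"
  shows "eq_upto N (factor_prod c T) (factor_prod c U)"
  unfolding factor_prod_def using assms
  by (intro eq_upto_prod_subset) (auto intro: eq_upto_one_plus_X_power)

lemma factor_prod_union:
  "finite A \<Longrightarrow> finite B \<Longrightarrow> A \<inter> B = {} \<Longrightarrow> factor_prod c (A \<union> B) = factor_prod c A * factor_prod c B"
  unfolding factor_prod_def by (rule prod.union_disjoint)

lemma factor_prod_double:
  "factor_prod 1 T * factor_prod (-1) T = factor_prod (-1) ((\<lambda>k. 2 * k) ` T)"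
proof -
  have "factor_prod 1 T * factor_prod (-1) T = (\<Prod>k\<in>T. 1 + fps_const (-1) * fps_X ^ (2 * k))"
    unfolding factor_prod_def prod.distrib[symmetric]
    by (intro prod.cong refl)
       (simp add: algebra_simps power_mult power2_eq_square fps_const_neg [symmetric]
             del: fps_const_neg flip: power_add)
  also have "\<dots> = factor_prod (-1) ((\<lambda>k. 2 * k) ` T)"
    unfolding factor_prod_def by (subst prod.reindex) (auto simp: inj_on_def)
  finally show ?thesis .
qed

lemma prod_progression_upto:
  assumes "0 < r" "r \<le> d" "N < K"
  shows "eq_upto N (\<Prod>k<K. 1 + fps_const c * fps_X ^ (d * k + r))
                   (factor_prod c (residues_upto N d (r mod d)))"
proof -
  have "(\<Prod>k<K. 1 + fps_const c * fps_X ^ (d * k + r)) = factor_prod c ((\<lambda>k. d * k + r) ` {..<K})"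
    unfolding factor_prod_def using assms by (subst prod.reindex) (auto simp: inj_on_def)
  also have "eq_upto N \<dots> (factor_prod c (residues_upto N d (r mod d)))"
  proof (rule factor_prod_upto)
    show "(\<lambda>k. d * k + r) ` {..<K} \<inter> {..N} = residues_upto N d (r mod d)"
    proof (intro equalityI subsetI)
      fix k assume "k \<in> residues_upto N d (r mod d)"
      hence k: "0 < k" "k \<le> N" "k mod d = r mod d" by (auto simp: residues_upto_def)
      have "r \<le> k"
      proof (cases "r = d")
        case True
        thus ?thesis using k by (auto elim!: dvd_imp_le simp: mod_eq_0_iff_dvd)
      next
        case False
        thus ?thesis using k assms(2) by (metis mod_less_eq_dividend mod_less order_less_le)
      qed
      with k(3) have "d dvd k - r" by (simp add: mod_eq_dvd_iff_nat)
      then obtain q where q: "k = d * q + r" using \<open>r \<le> k\<close> by (metis dvd_def le_add_diff_inverse2)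
      moreover have "q \<le> d * q" using assms(1,2) by simp
      hence "q < K" using q k(2) assms(3) by linarith
      ultimately show "k \<in> (\<lambda>k. d * k + r) ` {..<K} \<inter> {..N}"
        using k by auto
    qed (use assms in \<open>auto simp: residues_upto_def mod_add_left_eq\<close>)
  qed simp
  finally show ?thesis .
qed

lemma jacobi_product_upto_factor_prod:
  assumes "0 < b" "b < a" "N < K"
  shows "eq_upto N (jacobi_product a b s K)
           (factor_prod (-1) (residues_upto N (2 * a) 0)
            * factor_prod s (residues_upto N (2 * a) (a + b))
            * factor_prod s (residues_upto N (2 * a) (a - b)))"
proof -
  have qp: "qpochhammer (fps_X ^ (2 * a)) K = (\<Prod>k<K. 1 + fps_const (-1) * fps_X ^ (2 * a * k + 2 * a))"
    unfolding qpochhammer_def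
    by (simp add: prod.atLeast1_atMost_eq power_add mult.commute fps_const_neg [symmetric]
             del: fps_const_neg flip: power_mult)
  have exps: "a * (2 * k + 1) + b = 2 * a * k + (a + b)"
      "a * (2 * k + 1) - b = 2 * a * k + (a - b)" for k
    using assms(2) by (simp_all add: algebra_simps)
  have prods: "(\<Prod>k<K. (1 + fps_const s * fps_X ^ (a * (2 * k + 1) + b))
                        * (1 + fps_const s * fps_X ^ (a * (2 * k + 1) - b)))
      = (\<Prod>k<K. 1 + fps_const s * fps_X ^ (2 * a * k + (a + b)))
        * (\<Prod>k<K. 1 + fps_const s * fps_X ^ (2 * a * k + (a - b)))"
    by (simp only: exps prod.distrib)
  have "jacobi_product a b s K =
      (\<Prod>k<K. 1 + fps_const (-1) * fps_X ^ (2 * a * k + 2 * a))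
      * (\<Prod>k<K. 1 + fps_const s * fps_X ^ (2 * a * k + (a + b)))
      * (\<Prod>k<K. 1 + fps_const s * fps_X ^ (2 * a * k + (a - b)))"
    unfolding jacobi_product_def qp prods by (simp only: mult.assoc)
  also have "eq_upto N \<dots>
      (factor_prod (-1) (residues_upto N (2 * a) (2 * a mod (2 * a)))
       * factor_prod s (residues_upto N (2 * a) ((a + b) mod (2 * a)))
       * factor_prod s (residues_upto N (2 * a) ((a - b) mod (2 * a))))"
    using assms by (intro eq_upto_mult prod_progression_upto) auto
  finally show ?thesis
    using assms by simp
qed

lemma residues_upto_mod_12_union:
  "residues_upto N 12 0 \<union> residues_upto N 12 6 = residues_upto N 6 0"
  "residues_upto N 12 9 \<union> residues_upto N 12 3 = residues_upto N 6 3"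
proof (rule_tac [!] set_eqI)
  fix k :: nat
  have "k mod 12 = 0 \<or> k mod 12 = 6 \<longleftrightarrow> k mod 6 = 0" by presburger
  thus "k \<in> residues_upto N 12 0 \<union> residues_upto N 12 6 \<longleftrightarrow> k \<in> residues_upto N 6 0"
    unfolding residues_upto_def Un_iff mem_Collect_eq by argo
next
  fix k :: nat
  have "k mod 12 = 9 \<or> k mod 12 = 3 \<longleftrightarrow> k mod 6 = 3" by presburger
  thus "k \<in> residues_upto N 12 9 \<union> residues_upto N 12 3 \<longleftrightarrow> k \<in> residues_upto N 6 3"
    unfolding residues_upto_def Un_iff mem_Collect_eq by argo
qed

lemma odd_upto_eq_residues_upto:
  "{k. odd k \<and> k \<le> N} = residues_upto N 6 1 \<union> residues_upto N 6 3 \<union> residues_upto N 6 5"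
proof (rule set_eqI)
  fix k :: nat
  have "odd k \<longleftrightarrow> 0 < k \<and> (k mod 6 = 1 \<or> k mod 6 = 3 \<or> k mod 6 = 5)"
    by presburger
  thus "k \<in> {k. odd k \<and> k \<le> N}
        \<longleftrightarrow> k \<in> residues_upto N 6 1 \<union> residues_upto N 6 3 \<union> residues_upto N 6 5"
    unfolding residues_upto_def Un_iff mem_Collect_eq by argo
qed

lemma double_residues_upto:
  "(\<lambda>k. 2 * k) ` residues_upto N 6 3 \<inter> {..N} = residues_upto N 12 6"
proof -
  have "(k::nat) mod 12 = 6 \<longleftrightarrow> (\<exists>i. k = 2 * i \<and> i mod 6 = 3)" for k
    by presburger
  thus ?thesis unfolding residues_upto_def by auto
qed

lemma jacobi_product_3_2_eq_6_3_upto: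
  assumes "N < K"
  shows "eq_upto N (jacobi_product 3 2 (-1) K)
           (jacobi_product 6 3 1 K * (\<Prod>k | odd k \<and> k \<le> N. 1 - fps_X ^ k) :: 'a::comm_ring_1 fps)"
proof -
  define F where "F = factor_prod (-1 :: 'a)"
  define G where "G = factor_prod (1 :: 'a)"
  define R where "R = residues_upto N"
  have "(\<Prod>k | odd k \<and> k \<le> N. 1 - fps_X ^ k) = F {k. odd k \<and> k \<le> N}"
    by (simp add: F_def factor_prod_def fps_const_neg [symmetric] del: fps_const_neg)
  also have "\<dots> = F (R 6 1) * F (R 6 3) * F (R 6 5)"
    unfolding odd_upto_eq_residues_upto F_def R_def
    by (subst factor_prod_union; auto simp: residues_upto_def)+
  finally have odd: "(\<Prod>k | odd k \<and> k \<le> N. 1 - fps_X ^ k) = F (R 6 1) * F (R 6 3) * F (R 6 5)" .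
  have G3: "G (R 12 9) * G (R 12 3) = G (R 6 3)"
    unfolding G_def R_def residues_upto_mod_12_union(2) [symmetric]
    by (subst factor_prod_union) (auto simp: residues_upto_def)
  have F0: "F (R 12 0) * F (R 12 6) = F (R 6 0)"
    unfolding F_def R_def residues_upto_mod_12_union(1) [symmetric]
    by (subst factor_prod_union) (auto simp: residues_upto_def)
  have D: "eq_upto N (G (R 6 3) * F (R 6 3)) (F (R 12 6))"
    unfolding G_def F_def factor_prod_double R_def
    by (rule factor_prod_upto) (simp_all add: double_residues_upto)
  have JP3: "eq_upto N (jacobi_product 3 2 (-1) K) (F (R 6 0) * F (R 6 5) * F (R 6 1))"
    using jacobi_product_upto_factor_prod[of 2 3 N K "-1 :: 'a"] assms
    unfolding F_def R_def by simp
  have JP6: "eq_upto N (jacobi_product 6 3 1 K) (F (R 12 0) * G (R 12 9) * G (R 12 3))"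
    using jacobi_product_upto_factor_prod[of 3 6 N K "1 :: 'a"] assms
    unfolding F_def G_def R_def by simp
  have "eq_upto N (jacobi_product 6 3 1 K * (\<Prod>k | odd k \<and> k \<le> N. 1 - fps_X ^ k))
          (F (R 12 0) * G (R 12 9) * G (R 12 3) * (F (R 6 1) * F (R 6 3) * F (R 6 5)))"
    unfolding odd by (intro eq_upto_mult eq_upto_refl JP6)
  also have "\<dots> = F (R 12 0) * (G (R 6 3) * F (R 6 3)) * (F (R 6 1) * F (R 6 5))"
    by (simp only: G3 [symmetric] ac_simps)
  also have "eq_upto N \<dots> (F (R 12 0) * F (R 12 6) * (F (R 6 1) * F (R 6 5)))"
    by (intro eq_upto_mult eq_upto_refl D)
  also have "\<dots> = F (R 6 0) * F (R 6 5) * F (R 6 1)"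
    by (simp only: F0 ac_simps)
  also have "eq_upto N \<dots> (jacobi_product 3 2 (-1) K)"
    by (rule eq_upto_sym[OF JP3])
  finally show ?thesis by (rule eq_upto_sym)
qed

definition odd_partitions_gf :: "'a::comm_ring_1 fps" where
  "odd_partitions_gf = Abs_fps (\<lambda>m. of_nat (p_o (int m)))"

lemma odd_partitions_gf_upto:
  "eq_upto N (odd_partitions_gf * (\<Prod>k | odd k \<and> k \<le> N. 1 - fps_X ^ k)) 1"
proof -
  have "eq_upto N odd_partitions_gf (parts_gf {k. odd k \<and> k \<le> N})"
    by (simp add: eq_upto_def odd_partitions_gf_def parts_gf_def p_o_eq_parts_count)
  hence "eq_upto N (odd_partitions_gf * (\<Prod>k | odd k \<and> k \<le> N. 1 - fps_X ^ k))
                   (parts_gf {k. odd k \<and> k \<le> N} * (\<Prod>k | odd k \<and> k \<le> N. 1 - fps_X ^ k))"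
    by (rule eq_upto_mult) simp
  also have "parts_gf {k. odd k \<and> k \<le> N} * (\<Prod>k | odd k \<and> k \<le> N. 1 - fps_X ^ k) = 1"
    by (rule parts_gf_mult_prod) auto
  finally show ?thesis .
qed

theorem theta_mult_odd_partitions_gf_upto:
  fixes N :: nat
  defines "K \<equiv> 2 * N + 1"
  shows "eq_upto N (theta_partial 3 2 (-1) K * odd_partitions_gf)
                   (theta_partial 6 3 1 K :: 'a::idom fps)"
proof -
  have jacobi_3_2: "eq_upto N (jacobi_product 3 2 (-1) K) (theta_partial 3 2 (-1) K :: 'a fps)"
   and jacobi_6_3: "eq_upto N (jacobi_product 6 3 1 K) (theta_partial 6 3 1 K :: 'a fps)"
    unfolding K_def by (rule jacobi_triple_product_upto; simp)+
  have "eq_upto N (theta_partial 3 2 (-1) K * odd_partitions_gf)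
                  (jacobi_product 3 2 (-1) K * odd_partitions_gf :: 'a fps)"
    by (rule eq_upto_mult[OF eq_upto_sym[OF jacobi_3_2] eq_upto_refl])
  also have "eq_upto N \<dots> (jacobi_product 6 3 1 K * (\<Prod>k | odd k \<and> k \<le> N. 1 - fps_X ^ k)
                             * odd_partitions_gf)"
    unfolding K_def by (intro eq_upto_mult eq_upto_refl jacobi_product_3_2_eq_6_3_upto) simp
  also have "\<dots> = jacobi_product 6 3 1 K
                   * (odd_partitions_gf * (\<Prod>k | odd k \<and> k \<le> N. 1 - fps_X ^ k))"
    by (simp only: ac_simps)
  also have "eq_upto N \<dots> (jacobi_product 6 3 1 K * 1)"
    by (intro eq_upto_mult eq_upto_refl odd_partitions_gf_upto)
  also have "eq_upto N \<dots> (theta_partial 6 3 1 K)"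
    by (simp add: jacobi_6_3)
  finally show ?thesis .
qed

section \<open>Comparing coefficients\<close>

lemma fps_nth_X_power_mult_odd_partitions_gf:
  "fps_nth (fps_X ^ e * odd_partitions_gf) n = of_nat (p_o (int n - int e))"
proof (cases "n < e")
  case True
  thus ?thesis by (simp add: fps_X_power_mult_nth p_o_def)
next
  case False
  hence "int n - int e = int (n - e)" by simp
  thus ?thesis using False by (simp add: fps_X_power_mult_nth odd_partitions_gf_def)
qed

lemma fps_nth_theta_partial_mult_odd_partitions_gf:
  "fps_nth (theta_partial a b s K * odd_partitions_gf) n
     = of_nat (p_o (int n))
       + (\<Sum>j\<in>{1..K}. s ^ j * (of_nat (p_o (int n - int (a * j^2 + b * j)))
                                + of_nat (p_o (int n - int (a * j^2 - b * j)))))"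
proof -
  have "theta_partial a b s K * odd_partitions_gf = odd_partitions_gf
      + (\<Sum>j\<in>{1..K}. fps_const (s ^ j) * (fps_X ^ (a * j^2 + b * j) * odd_partitions_gf
                                          + fps_X ^ (a * j^2 - b * j) * odd_partitions_gf))"
    unfolding theta_partial_def by (simp add: algebra_simps sum_distrib_left sum_distrib_right)
  thus ?thesis
    by (simp add: fps_sum_nth fps_nth_X_power_mult_odd_partitions_gf) (simp add: odd_partitions_gf_def)
qed

lemma fps_nth_theta_3_2_mult_odd_partitions_gf:
  assumes "n \<le> K"
  shows "fps_nth (theta_partial 3 2 (-1) K * odd_partitions_gf) n
       = int (p_o (int n))
         + (\<Sum>j\<in>{1..n}. (-1) ^ j * (int (p_o (int n - int j * (3 * int j - 2)))
                                   + int (p_o (int n - int j * (3 * int j + 2)))))"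
proof -
  define g where "g j = (-1) ^ j * (int (p_o (int n - int j * (3 * int j - 2)))
                                   + int (p_o (int n - int j * (3 * int j + 2))))" for j :: nat
  have "int (3 * j^2 - 2 * j) = int j * (3 * int j - 2)"
   and "int (3 * j^2 + 2 * j) = int j * (3 * int j + 2)" for j :: nat
    by (cases j; simp add: power2_eq_square of_nat_diff algebra_simps)+
  hence "fps_nth (theta_partial 3 2 (-1) K * odd_partitions_gf) n = int (p_o (int n)) + (\<Sum>j\<in>{1..K}. g j)"
    by (simp add: fps_nth_theta_partial_mult_odd_partitions_gf g_def add.commute)
  also have "(\<Sum>j\<in>{1..K}. g j) = (\<Sum>j\<in>{1..n}. g j)"
  proof (rule sum.mono_neutral_right)
    show "\<forall>j\<in>{1..K} - {1..n}. g j = 0"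
    proof
      fix j assume "j \<in> {1..K} - {1..n}"
      hence "int n < int j * (3 * int j - 2)" "int n < int j * (3 * int j + 2)"
        by (auto intro: less_le_trans[of _ "int j"] simp: mult_le_cancel_left1)
      thus "g j = 0" by (simp add: g_def p_o_def)
    qed
  qed (use assms in auto)
  finally show ?thesis by (simp add: g_def)
qed

definition triangle :: "nat \<Rightarrow> nat" where
  "triangle k = k * (k + 1) div 2"

lemma triangle_Suc: "triangle (Suc k) = triangle k + Suc k"
proof -
  have "Suc k * (Suc k + 1) = k * (k + 1) + 2 * Suc k" by (simp add: algebra_simps)
  thus ?thesis by (simp add: triangle_def)
qed

lemma strict_mono_triangle: "strict_mono triangle"
  by (simp add: strict_mono_Suc_iff triangle_Suc)

lemma le_triangle: "k \<le> triangle k"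
  by (induction k) (simp_all add: triangle_Suc triangle_def)

lemma triangle_double: "triangle (2 * j) = 2 * j^2 + j"
  and triangle_double_minus_1: "triangle (2 * j - 1) = 2 * j^2 - j"
proof -
  have "(2 * j) * (2 * j + 1) = 2 * (2 * j^2 + j)"
    by (simp add: power2_eq_square algebra_simps)
  thus "triangle (2 * j) = 2 * j^2 + j" by (simp add: triangle_def)
  thus "triangle (2 * j - 1) = 2 * j^2 - j"
    by (cases j) (simp_all add: triangle_Suc)
qed

lemma sum_atMost_double_parity:
  fixes K :: nat
  shows "(\<Sum>k\<le>2*K. f k) = f 0 + (\<Sum>j\<in>{1..K}. f (2 * j) + f (2 * j - 1))"
proof (induction K)
  case (Suc K)
  have "(\<Sum>k\<le>2 * Suc K. f k) = (\<Sum>k\<le>2*K. f k) + f (2 * K + 1) + f (2 * K + 2)"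
    by simp
  thus ?case using Suc by (simp add: ac_simps)
qed simp

lemma theta_partial_6_3_eq_sum_triangle:
  "theta_partial 6 3 1 K = (\<Sum>k\<le>2*K. fps_X ^ (3 * triangle k))"
proof -
  have even: "3 * triangle (2 * j) = 6 * j^2 + 3 * j"
    and odd: "3 * triangle (2 * j - 1) = 6 * j^2 - 3 * j" for j
    using triangle_double[of j] triangle_double_minus_1[of j] by simp_all
  show ?thesis
    unfolding sum_atMost_double_parity even odd by (simp add: theta_partial_def triangle_def add.commute)
qed

lemma fps_nth_sum_X_power_inj:
  assumes "finite A" "inj_on g A"
  shows "fps_nth (\<Sum>k\<in>A. fps_X ^ g k) n = (if \<exists>k\<in>A. n = g k then 1 else 0)"
proof (cases "\<exists>k\<in>A. n = g k")
  case True
  then obtain k0 where k0: "k0 \<in> A" "n = g k0" by blast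
  have "fps_nth (\<Sum>k\<in>A. fps_X ^ g k) n = (\<Sum>k\<in>A. if n = g k then 1 else 0)"
    by (simp add: fps_sum_nth)
  also have "\<dots> = (\<Sum>k\<in>{k0}. if n = g k then 1 else 0)"
    by (rule sum.mono_neutral_right) (use assms k0 in \<open>auto simp: inj_on_def\<close>)
  finally show ?thesis using k0 by auto
next
  case False
  thus ?thesis by (simp add: fps_sum_nth)
qed

lemma fps_nth_theta_partial_6_3:
  assumes "n < K"
  shows "fps_nth (theta_partial 6 3 1 K) n = (if \<exists>t. triangular t \<and> n = 3 * t then 1 else 0)"
proof -
  have "(\<exists>t. triangular t \<and> n = 3 * t) \<longleftrightarrow> (\<exists>k\<in>{..2*K}. n = 3 * triangle k)"
    using assms le_triangle by (auto simp: triangular_def triangle_def)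
  moreover have "inj_on (\<lambda>k. 3 * triangle k) {..2*K}"
    using strict_mono_triangle by (auto simp: inj_on_def strict_mono_eq)
  ultimately show ?thesis
    by (simp add: theta_partial_6_3_eq_sum_triangle fps_nth_sum_X_power_inj)
qed

theorem theorem6:
  fixes n :: nat
  shows "int (p_o (int n))
         + (\<Sum>j\<in>{1..n}. (-1) ^ j * (int (p_o (int n - int j * (3 * int j - 2)))
                                   + int (p_o (int n - int j * (3 * int j + 2)))))
         = (if \<exists>t. triangular t \<and> n = 3 * t then 1 else 0)"
proof -
  define K where "K = 2 * n + 1"
  have "eq_upto n (theta_partial 3 2 (-1) K * odd_partitions_gf) (theta_partial 6 3 1 K :: int fps)"
    unfolding K_def by (rule theta_mult_odd_partitions_gf_upto)
  hence "fps_nth (theta_partial 3 2 (-1) K * odd_partitions_gf :: int fps) n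
       = fps_nth (theta_partial 6 3 1 K) n"
    by (simp add: eq_upto_def)
  thus ?thesis
    by (simp add: fps_nth_theta_3_2_mult_odd_partitions_gf fps_nth_theta_partial_6_3 K_def)
qed

end
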